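(* For the estimators defined in the context (and assuming all matrices inverted below and in the context are invertible), $$\hat\tau_{\mathrm{pdd}}=\hat\tau^y_{\mathrm{rdd}}-(\hat\tau^w_{\mathrm{rdd}})^\top\hat\gamma_- \quad\text{exactly (numerically), for every sample.}$$ Moreover $$\hat\gamma_-=\Big[\tfrac1n\sum_{i=1}^n\omega_{i,-}Z_i(W_i^\perp)^\top\Big]^{-1}\Big\{\tfrac1n\sum_{i=1}^n\omega_{i,-}Z_iY_i^\perp\Big\}.$$ Here the residuals from local linear regressions on the running variable below the cutoff are $$Y_i^\perp=Y_i-R_{i,1}^\top\Big(\sum_{j}\omega_{j,-}R_{j,1}R_{j,1}^\top\Big)^{-1}\sum_j\omega_{j,-}R_{j,1}Y_j,$$ $$W_i^{\perp\top}=W_i^\top-R_{i,1}^\top\Big(\sum_{j}\omega_{j,-}R_{j,1}R_{j,1}^\top\Big)^{-1}\sum_j\omega_{j,-}R_{j,1}W_j^\top.$$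
   Context: Data and cutoff. The data are observations $(Y_i,W_i,D_i,Z_i)$, $i=1,\dots,n$, with $Y_i,D_i\in\mathbb{R}$ and $W_i,Z_i\in\mathbb{R}^q$. The cutoff $d^*$ is known. $K\ge0$ is a kernel and $h_n>0$ a bandwidth. Basic objects: - Kernel weights: $\omega_{i,+}=h_n^{-1}\mathbf{1}\{D_i\ge d^*\}K(|D_i-d^*|/h_n)$ and $\omega_{i,-}=h_n^{-1}\mathbf{1}\{D_i<d^*\}K(|D_i-d^*|/h_n)$. - $R_{i,1}=(1,(D_i-d^* )/h_n)^\top$ and $H_1=\mathrm{diag}(1,h_n)$. Local linear fits. For $v\in\{y,w_1,\dots,w_q\}$ (with corresponding data $Y_i$ or $W_{i,j}$) and $s\in\{+,-\}$, define $\hat\beta^v_s$ by $$H_1\hat\beta^v_s=\arg\min_\beta\sum_i\omega_{i,s}(V_i-R_{i,1}^\top\beta)^2.$$ Let $\hat\beta^v_{s,0}$ be its first component and $\hat\beta^w_{s,0}=(\hat\beta^{w_1}_{s,0},\dots,\hat\beta^{w_q}_{s,0})^\top$. Set $\hat\tau^y_{\mathrm{rdd}}=\hat\beta^y_{+,0}-\hat\beta^y_{-,0}$ and $\hat\tau^w_{\mathrm{rdd}}=\hat\beta^w_{+,0}-\hat\beta^w_{-,0}\in\mathbb{R}^q$. Local instrumental variable regression. For $s\in\{+,-\}$, $(\hat\alpha_s,\hat\gamma_s)\in\mathbb{R}^2\times\mathbb{R}^q$ solve $$\frac1n\sum_{i=1}^n\omega_{i,s}\begin{bmatrix}R_{i,1}\\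 Z_i\end{bmatrix}\big(Y_i-R_{i,1}^\top H_1\hat\alpha_s-W_i^\top\hat\gamma_s\big)=0,$$ and $\hat\alpha_{s,0}$ denotes the first component of $\hat\alpha_s$. Estimator. The placebo discontinuity estimator is $$\hat\tau_{\mathrm{pdd}}=\hat\alpha_{+,0}+(\hat\beta^w_{+,0})^\top\hat\gamma_+-\big\{\hat\alpha_{-,0}+(\hat\beta^w_{+,0})^\top\hat\gamma_-\big\}.$$ *)

theory Defs
  imports "HOL-Analysis.Analysis"
begin

definition vec2 :: "real \<Rightarrow> real \<Rightarrow> real^2" where
  "vec2 a b = (\<chi> i. if i = 1 then a else b)"

definition outer :: "real^'m \<Rightarrow> real^'n \<Rightarrow> real^'n^'m" where
  "outer u v = (\<chi> i j. u $ i * v $ j)"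

definition w_plus :: "(nat \<Rightarrow> real) \<Rightarrow> real \<Rightarrow> (real \<Rightarrow> real) \<Rightarrow> real \<Rightarrow> nat \<Rightarrow> real" where
  "w_plus D d K h i = (1 / h) * (if D i \<ge> d then 1 else 0) * K (\<bar>D i - d\<bar> / h)"

definition w_minus :: "(nat \<Rightarrow> real) \<Rightarrow> real \<Rightarrow> (real \<Rightarrow> real) \<Rightarrow> real \<Rightarrow> nat \<Rightarrow> real" where
  "w_minus D d K h i = (1 / h) * (if D i < d then 1 else 0) * K (\<bar>D i - d\<bar> / h)"

definition Rvec :: "(nat \<Rightarrow> real) \<Rightarrow> real \<Rightarrow> real \<Rightarrow> nat \<Rightarrow> real^2" where
  "Rvec D d h i = vec2 1 ((D i - d) / h)"

definition H1 :: "real \<Rightarrow> real^2^2" where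
  "H1 h = (\<chi> i j. if i = j then (if i = 1 then 1 else h) else 0)"

definition is_ll_argmin :: "nat \<Rightarrow> (nat \<Rightarrow> real) \<Rightarrow> (nat \<Rightarrow> real^2) \<Rightarrow> (nat \<Rightarrow> real) \<Rightarrow> real^2 \<Rightarrow> bool" where
  "is_ll_argmin n \<omega> R V b \<longleftrightarrow>
     (\<forall>c. (\<Sum>i<n. \<omega> i * (V i - R i \<bullet> b)^2) \<le> (\<Sum>i<n. \<omega> i * (V i - R i \<bullet> c)^2))"

definition llfit :: "nat \<Rightarrow> real \<Rightarrow> (nat \<Rightarrow> real) \<Rightarrow> (nat \<Rightarrow> real^2) \<Rightarrow> (nat \<Rightarrow> real) \<Rightarrow> real^2" where
  "llfit n h \<omega> R V = (SOME \<beta>. is_ll_argmin n \<omega> R V (H1 h *v \<beta>))"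

definition beta_y0 :: "nat \<Rightarrow> real \<Rightarrow> (nat \<Rightarrow> real) \<Rightarrow> (nat \<Rightarrow> real^2) \<Rightarrow> (nat \<Rightarrow> real) \<Rightarrow> real" where
  "beta_y0 n h \<omega> R Y = llfit n h \<omega> R Y $ 1"

definition beta_w0 :: "nat \<Rightarrow> real \<Rightarrow> (nat \<Rightarrow> real) \<Rightarrow> (nat \<Rightarrow> real^2) \<Rightarrow> (nat \<Rightarrow> real^'q) \<Rightarrow> real^'q" where
  "beta_w0 n h \<omega> R W = (\<chi> j. llfit n h \<omega> R (\<lambda>i. W i $ j) $ 1)"

definition iv_eq :: "nat \<Rightarrow> real \<Rightarrow> (nat \<Rightarrow> real) \<Rightarrow> (nat \<Rightarrow> real^2) \<Rightarrow> (nat \<Rightarrow> real)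
     \<Rightarrow> (nat \<Rightarrow> real^'q) \<Rightarrow> (nat \<Rightarrow> real^'q) \<Rightarrow> real^2 \<Rightarrow> real^'q \<Rightarrow> bool" where
  "iv_eq n h \<omega> R Y W Z \<alpha> \<gamma> \<longleftrightarrow>
     (1 / real n) *\<^sub>R (\<Sum>i<n. (\<omega> i * (Y i - R i \<bullet> (H1 h *v \<alpha>) - W i \<bullet> \<gamma>)) *\<^sub>R R i) = 0 \<and>
     (1 / real n) *\<^sub>R (\<Sum>i<n. (\<omega> i * (Y i - R i \<bullet> (H1 h *v \<alpha>) - W i \<bullet> \<gamma>)) *\<^sub>R Z i) = 0"

definition iv_sol :: "nat \<Rightarrow> real \<Rightarrow> (nat \<Rightarrow> real) \<Rightarrow> (nat \<Rightarrow> real^2) \<Rightarrow> (nat \<Rightarrow> real)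
     \<Rightarrow> (nat \<Rightarrow> real^'q) \<Rightarrow> (nat \<Rightarrow> real^'q) \<Rightarrow> (real^2) \<times> (real^'q)" where
  "iv_sol n h \<omega> R Y W Z = (SOME p. iv_eq n h \<omega> R Y W Z (fst p) (snd p))"

definition gram :: "nat \<Rightarrow> (nat \<Rightarrow> real) \<Rightarrow> (nat \<Rightarrow> real^2) \<Rightarrow> real^2^2" where
  "gram n \<omega> R = (\<Sum>j<n. \<omega> j *\<^sub>R outer (R j) (R j))"

definition Y_perp :: "nat \<Rightarrow> (nat \<Rightarrow> real) \<Rightarrow> (nat \<Rightarrow> real^2) \<Rightarrow> (nat \<Rightarrow> real) \<Rightarrow> nat \<Rightarrow> real" where
  "Y_perp n \<omega> R Y i = Y i - R i \<bullet> (matrix_inv (gram n \<omega> R) *v (\<Sum>j<n. (\<omega> j * Y j) *\<^sub>R R j))"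

definition W_perp :: "nat \<Rightarrow> (nat \<Rightarrow> real) \<Rightarrow> (nat \<Rightarrow> real^2) \<Rightarrow> (nat \<Rightarrow> real^'q) \<Rightarrow> nat \<Rightarrow> real^'q" where
  "W_perp n \<omega> R W i = W i - R i v* (matrix_inv (gram n \<omega> R) ** (\<Sum>j<n. \<omega> j *\<^sub>R outer (R j) (W j)))"

end

theory Submission
  imports Defs
begin

text \<open>On either side of the cutoff, the instrument-free block of the local IV moment
equations is the normal equation of the weighted least-squares regression of
\<open>Y - W\<^sup>T\<gamma>\<close> on \<open>R\<close>. Hence \<open>H\<^sub>1\<alpha>\<close> is the local linear fit of \<open>Y - W\<^sup>T\<gamma>\<close>, and since
the fit is linear in the response, \<open>\<alpha>\<^sub>0 = \<beta>\<^sup>y\<^sub>0 - (\<beta>\<^sup>w\<^sub>0)\<^sup>T\<gamma>\<close>; substituted into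
\<open>\<tau>_pdd\<close>, the terms in \<open>\<gamma>\<^sub>+\<close> cancel. Substituting the same \<open>\<alpha>\<close> into the instrument
block leaves a moment equation in the residuals \<open>Y\<^sup>\<bottom> - W\<^sup>\<bottom>\<^sup>T\<gamma>\<close>
(Frisch-Waugh-Lovell), which is linear in \<open>\<gamma>\<close> and solved for \<open>\<gamma>\<^sub>-\<close>.\<close>

lemma matrix_inv_mult_vec_eq_iff:
  fixes A :: "'a::field^'n^'m"
  assumes "invertible A"
  shows "A *v x = y \<longleftrightarrow> x = matrix_inv A *v y"
proof -
  have "A ** matrix_inv A = mat 1" "matrix_inv A ** A = mat 1"
    using someI_ex[OF assms[unfolded invertible_def]] unfolding matrix_inv_def by auto
  then show ?thesis
    by (metis matrix_vector_mul_assoc matrix_vector_mul_lid)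
qed

lemma sum_outer_mult_vec:
  "(\<Sum>i\<in>S. c i *\<^sub>R outer (u i) (v i)) *v x = (\<Sum>i\<in>S. (c i * (v i \<bullet> x)) *\<^sub>R u i)"
  by (simp add: vec_eq_iff matrix_vector_mult_def outer_def inner_vec_def sum_distrib_left
      sum_distrib_right sum.swap[of _ S] mult_ac)

lemma gram_mult_vec: "gram n \<omega> R *v b = (\<Sum>i<n. (\<omega> i * (R i \<bullet> b)) *\<^sub>R R i)"
  unfolding gram_def sum_outer_mult_vec by (simp add: inner_commute)

lemma sum_weighted_residual:
  "(\<Sum>i<n. (\<omega> i * (V i - R i \<bullet> b)) *\<^sub>R R i) = (\<Sum>i<n. (\<omega> i * V i) *\<^sub>R R i) - gram n \<omega> R *v b"
  by (simp add: gram_mult_vec right_diff_distrib scaleR_diff_left sum_subtractf)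

lemma weighted_sq_residual_expand:
  fixes R :: "nat \<Rightarrow> 'a::real_inner"
  shows "(\<Sum>i\<in>S. \<omega> i * (V i - R i \<bullet> c)^2) = (\<Sum>i\<in>S. \<omega> i * (V i - R i \<bullet> b)^2)
     - 2 * ((\<Sum>i\<in>S. (\<omega> i * (V i - R i \<bullet> b)) *\<^sub>R R i) \<bullet> (c - b))
     + (\<Sum>i\<in>S. \<omega> i * (R i \<bullet> (c - b))^2)"
proof -
  have "\<omega> i * (V i - R i \<bullet> c)^2 = \<omega> i * (V i - R i \<bullet> b)^2
      - 2 * (\<omega> i * (V i - R i \<bullet> b) * (R i \<bullet> (c - b))) + \<omega> i * (R i \<bullet> (c - b))^2" for i
    by (simp add: power2_eq_square algebra_simps)
  then show ?thesis
    by (simp add: sum.distrib sum_subtractf inner_sum_left sum_distrib_left)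
qed

definition wls_coef :: "nat \<Rightarrow> (nat \<Rightarrow> real) \<Rightarrow> (nat \<Rightarrow> real^2) \<Rightarrow> (nat \<Rightarrow> real) \<Rightarrow> real^2" where
  "wls_coef n \<omega> R V = matrix_inv (gram n \<omega> R) *v (\<Sum>i<n. (\<omega> i * V i) *\<^sub>R R i)"

lemma gram_mult_wls_coef:
  assumes "invertible (gram n \<omega> R)"
  shows "gram n \<omega> R *v wls_coef n \<omega> R V = (\<Sum>i<n. (\<omega> i * V i) *\<^sub>R R i)"
  by (simp add: wls_coef_def matrix_inv_mult_vec_eq_iff[OF assms])

lemma is_ll_argmin_iff_wls_coef:
  assumes nonneg: "\<And>i. \<omega> i \<ge> 0" and inv: "invertible (gram n \<omega> R)"
  shows "is_ll_argmin n \<omega> R V b \<longleftrightarrow> b = wls_coef n \<omega> R V"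
proof -
  define b0 where "b0 = wls_coef n \<omega> R V"
  have normal: "(\<Sum>i<n. (\<omega> i * (V i - R i \<bullet> b0)) *\<^sub>R R i) = 0"
    unfolding sum_weighted_residual b0_def gram_mult_wls_coef[OF inv] by simp
  have excess: "(\<Sum>i<n. \<omega> i * (V i - R i \<bullet> c)^2)
      = (\<Sum>i<n. \<omega> i * (V i - R i \<bullet> b0)^2) + (\<Sum>i<n. \<omega> i * (R i \<bullet> (c - b0))^2)" for c
    using weighted_sq_residual_expand[of \<omega> V R c "{..<n}" b0] normal by simp
  have excess_nonneg: "(\<Sum>i<n. \<omega> i * (R i \<bullet> (c - b0))^2) \<ge> 0" for c
    using nonneg by (simp add: sum_nonneg)
  have "b = b0" if "is_ll_argmin n \<omega> R V b"
  proof -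
    have "(\<Sum>i<n. \<omega> i * (V i - R i \<bullet> b)^2) \<le> (\<Sum>i<n. \<omega> i * (V i - R i \<bullet> b0)^2)"
      using that unfolding is_ll_argmin_def by blast
    then have "(\<Sum>i<n. \<omega> i * (R i \<bullet> (b - b0))^2) = 0"
      using excess[of b] excess_nonneg[of b] by linarith
    then have "\<omega> i * (R i \<bullet> (b - b0)) = 0" if "i < n" for i
      using that nonneg by (simp add: sum_nonneg_eq_0_iff)
    then have "gram n \<omega> R *v (b - b0) = 0"
      unfolding gram_mult_vec by (intro sum.neutral) simp
    then show "b = b0"
      using matrix_inv_mult_vec_eq_iff[OF inv, of "b - b0" 0] by simp
  qed
  moreover have "is_ll_argmin n \<omega> R V b0"
    unfolding is_ll_argmin_def
  proof
    show "(\<Sum>i<n. \<omega> i * (V i - R i \<bullet> b0)^2) \<le> (\<Sum>i<n. \<omega> i * (V i - R i \<bullet> c)^2)" for c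
      using excess[of c] excess_nonneg[of c] by linarith
  qed
  ultimately show ?thesis unfolding b0_def by blast
qed

lemma H1_mult_vec_nth: "(H1 h *v \<beta>) $ i = (if i = 1 then 1 else h) * \<beta> $ i"
proof -
  have "(H1 h *v \<beta>) $ i = (\<Sum>j\<in>UNIV. if j = i then (if i = 1 then 1 else h) * \<beta> $ j else 0)"
    unfolding matrix_vector_mult_def vec_lambda_beta H1_def by (intro sum.cong) auto
  then show ?thesis by simp
qed

lemma llfit_first:
  assumes nonneg: "\<And>i. \<omega> i \<ge> 0" and inv: "invertible (gram n \<omega> R)" and "h \<noteq> 0"
  shows "llfit n h \<omega> R V $ 1 = wls_coef n \<omega> R V $ 1"
proof -
  let ?b = "wls_coef n \<omega> R V"
  have "H1 h *v (\<chi> i. if i = 1 then ?b $ i else ?b $ i / h) = ?b"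
    using \<open>h \<noteq> 0\<close> by (simp add: vec_eq_iff H1_mult_vec_nth)
  then have "\<exists>\<beta>. is_ll_argmin n \<omega> R V (H1 h *v \<beta>)"
    using is_ll_argmin_iff_wls_coef[OF nonneg inv] by metis
  then have "is_ll_argmin n \<omega> R V (H1 h *v llfit n h \<omega> R V)"
    unfolding llfit_def by (rule someI_ex)
  then have "H1 h *v llfit n h \<omega> R V = ?b"
    using is_ll_argmin_iff_wls_coef[OF nonneg inv] by blast
  then show ?thesis
    using H1_mult_vec_nth[of h "llfit n h \<omega> R V" 1] by simp
qed

definition wls_coef_matrix :: "nat \<Rightarrow> (nat \<Rightarrow> real) \<Rightarrow> (nat \<Rightarrow> real^2) \<Rightarrow> (nat \<Rightarrow> real^'q) \<Rightarrow> real^'q^2" where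
  "wls_coef_matrix n \<omega> R W = matrix_inv (gram n \<omega> R) ** (\<Sum>i<n. \<omega> i *\<^sub>R outer (R i) (W i))"

lemma wls_coef_matrix_nth:
  "wls_coef_matrix n \<omega> R W $ k $ j = wls_coef n \<omega> R (\<lambda>i. W i $ j) $ k"
  by (simp add: wls_coef_matrix_def wls_coef_def matrix_matrix_mult_def matrix_vector_mult_def
      outer_def mult_ac)

lemma wls_coef_matrix_mult_vec:
  "wls_coef_matrix n \<omega> R W *v \<gamma> = wls_coef n \<omega> R (\<lambda>i. W i \<bullet> \<gamma>)"
  unfolding wls_coef_matrix_def wls_coef_def matrix_vector_mul_assoc[symmetric] sum_outer_mult_vec ..

lemma wls_coef_diff:
  "wls_coef n \<omega> R (\<lambda>i. U i - V i) = wls_coef n \<omega> R U - wls_coef n \<omega> R V"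
  by (simp add: wls_coef_def right_diff_distrib scaleR_diff_left sum_subtractf
      matrix_vector_mult_diff_distrib)

lemma beta_y0_eq_wls_coef:
  assumes "\<And>i. \<omega> i \<ge> 0" "invertible (gram n \<omega> R)" "h \<noteq> 0"
  shows "beta_y0 n h \<omega> R Y = wls_coef n \<omega> R Y $ 1"
  unfolding beta_y0_def using llfit_first[OF assms] .

lemma beta_w0_inner_eq_wls_coef:
  assumes "\<And>i. \<omega> i \<ge> 0" "invertible (gram n \<omega> R)" "h \<noteq> 0"
  shows "beta_w0 n h \<omega> R W \<bullet> \<gamma> = wls_coef n \<omega> R (\<lambda>i. W i \<bullet> \<gamma>) $ 1"
proof -
  have "beta_w0 n h \<omega> R W = (\<chi> j. wls_coef_matrix n \<omega> R W $ 1 $ j)"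
    by (simp add: beta_w0_def vec_eq_iff llfit_first[OF assms] wls_coef_matrix_nth)
  then have "beta_w0 n h \<omega> R W \<bullet> \<gamma> = (wls_coef_matrix n \<omega> R W *v \<gamma>) $ 1"
    by (simp add: inner_vec_def matrix_vector_mult_def)
  then show ?thesis
    by (simp add: wls_coef_matrix_mult_vec)
qed

lemma W_perp_inner:
  "W_perp n \<omega> R W i \<bullet> \<gamma> = W i \<bullet> \<gamma> - R i \<bullet> wls_coef n \<omega> R (\<lambda>i. W i \<bullet> \<gamma>)"
  by (simp add: W_perp_def wls_coef_matrix_def[symmetric] inner_diff_left dot_lmul_matrix
      wls_coef_matrix_mult_vec)

lemma Y_perp_eq: "Y_perp n \<omega> R Y i = Y i - R i \<bullet> wls_coef n \<omega> R Y"
  unfolding Y_perp_def wls_coef_def ..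

lemma mean_eq_0_iff: "(1 / real n) *\<^sub>R (\<Sum>i<n. f i) = 0 \<longleftrightarrow> (\<Sum>i<n. f i) = (0::'a::real_vector)"
  by (cases "n = 0") simp_all

lemma iv_eq_partial_out:
  assumes inv: "invertible (gram n \<omega> R)" and iv: "iv_eq n h \<omega> R Y W Z \<alpha> \<gamma>"
  shows "H1 h *v \<alpha> = wls_coef n \<omega> R (\<lambda>i. Y i - W i \<bullet> \<gamma>)"
proof -
  have "(\<Sum>i<n. (\<omega> i * ((Y i - W i \<bullet> \<gamma>) - R i \<bullet> (H1 h *v \<alpha>))) *\<^sub>R R i) = 0"
    using iv unfolding iv_eq_def mean_eq_0_iff by (simp add: algebra_simps)
  then have "gram n \<omega> R *v (H1 h *v \<alpha>) = (\<Sum>i<n. (\<omega> i * (Y i - W i \<bullet> \<gamma>)) *\<^sub>R R i)"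
    unfolding sum_weighted_residual by simp
  then show ?thesis
    unfolding wls_coef_def matrix_inv_mult_vec_eq_iff[OF inv] .
qed

lemma iv_intercept_eq:
  assumes "\<And>i. \<omega> i \<ge> 0" "invertible (gram n \<omega> R)" "h \<noteq> 0"
    and "iv_eq n h \<omega> R Y W Z \<alpha> \<gamma>"
  shows "\<alpha> $ 1 = beta_y0 n h \<omega> R Y - beta_w0 n h \<omega> R W \<bullet> \<gamma>"
proof -
  have "\<alpha> $ 1 = (H1 h *v \<alpha>) $ 1"
    by (simp add: H1_mult_vec_nth)
  also have "\<dots> = wls_coef n \<omega> R Y $ 1 - wls_coef n \<omega> R (\<lambda>i. W i \<bullet> \<gamma>) $ 1"
    by (simp add: iv_eq_partial_out[OF assms(2,4)] wls_coef_diff)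
  finally show ?thesis
    by (simp add: beta_y0_eq_wls_coef[OF assms(1-3)] beta_w0_inner_eq_wls_coef[OF assms(1-3)])
qed

lemma iv_residualized_moment:
  assumes inv: "invertible (gram n \<omega> R)" and iv: "iv_eq n h \<omega> R Y W Z \<alpha> \<gamma>"
  shows "(\<Sum>i<n. (\<omega> i * (Y_perp n \<omega> R Y i - W_perp n \<omega> R W i \<bullet> \<gamma>)) *\<^sub>R Z i) = 0"
proof -
  have "Y i - R i \<bullet> (H1 h *v \<alpha>) - W i \<bullet> \<gamma> = Y_perp n \<omega> R Y i - W_perp n \<omega> R W i \<bullet> \<gamma>" for i
    by (simp add: iv_eq_partial_out[OF assms] wls_coef_diff Y_perp_eq W_perp_inner inner_diff_right)
  then show ?thesis
    using iv unfolding iv_eq_def mean_eq_0_iff by simp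
qed

lemma iv_slope_eq:
  assumes inv: "invertible (gram n \<omega> R)" and iv: "iv_eq n h \<omega> R Y W Z \<alpha> \<gamma>"
    and inv_ZW: "invertible ((1 / real n) *\<^sub>R (\<Sum>i<n. \<omega> i *\<^sub>R outer (Z i) (W_perp n \<omega> R W i)))"
  shows "\<gamma> = matrix_inv ((1 / real n) *\<^sub>R (\<Sum>i<n. \<omega> i *\<^sub>R outer (Z i) (W_perp n \<omega> R W i)))
            *v ((1 / real n) *\<^sub>R (\<Sum>i<n. (\<omega> i * Y_perp n \<omega> R Y i) *\<^sub>R Z i))"
proof -
  have "(\<Sum>i<n. (\<omega> i * (W_perp n \<omega> R W i \<bullet> \<gamma>)) *\<^sub>R Z i) = (\<Sum>i<n. (\<omega> i * Y_perp n \<omega> R Y i) *\<^sub>R Z i)"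
    using iv_residualized_moment[OF assms(1,2)]
    by (simp add: right_diff_distrib scaleR_diff_left sum_subtractf)
  then have "((1 / real n) *\<^sub>R (\<Sum>i<n. \<omega> i *\<^sub>R outer (Z i) (W_perp n \<omega> R W i))) *v \<gamma>
      = (1 / real n) *\<^sub>R (\<Sum>i<n. (\<omega> i * Y_perp n \<omega> R Y i) *\<^sub>R Z i)"
    by (simp add: scaleR_matrix_vector_assoc[symmetric] sum_outer_mult_vec)
  then show ?thesis
    unfolding matrix_inv_mult_vec_eq_iff[OF inv_ZW] .
qed

theorem proposition1:
  fixes n :: nat and Y D :: "nat \<Rightarrow> real" and W Z :: "nat \<Rightarrow> real^'q"
    and d h :: real and K :: "real \<Rightarrow> real"
  defines "\<omega>p \<equiv> w_plus D d K h" and "\<omega>m \<equiv> w_minus D d K h" and "R \<equiv> Rvec D d h"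
  defines "tau_y_rdd \<equiv> beta_y0 n h \<omega>p R Y - beta_y0 n h \<omega>m R Y"
    and "tau_w_rdd \<equiv> beta_w0 n h \<omega>p R W - beta_w0 n h \<omega>m R W"
  defines "\<alpha>p \<equiv> fst (iv_sol n h \<omega>p R Y W Z)" and "\<gamma>p \<equiv> snd (iv_sol n h \<omega>p R Y W Z)"
    and "\<alpha>m \<equiv> fst (iv_sol n h \<omega>m R Y W Z)" and "\<gamma>m \<equiv> snd (iv_sol n h \<omega>m R Y W Z)"
  defines "tau_pdd \<equiv> (\<alpha>p $ 1 + beta_w0 n h \<omega>p R W \<bullet> \<gamma>p)
                    - (\<alpha>m $ 1 + beta_w0 n h \<omega>p R W \<bullet> \<gamma>m)"
  assumes K_nonneg: "\<And>u. K u \<ge> 0" and h_pos: "h > 0"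
    and inv_gram_p: "invertible (gram n \<omega>p R)"
    and inv_gram_m: "invertible (gram n \<omega>m R)"
    and iv_unique_p: "\<exists>!p. iv_eq n h \<omega>p R Y W Z (fst p) (snd p)"
    and iv_unique_m: "\<exists>!p. iv_eq n h \<omega>m R Y W Z (fst p) (snd p)"
    and inv_ZW: "invertible ((1 / real n) *\<^sub>R (\<Sum>i<n. \<omega>m i *\<^sub>R outer (Z i) (W_perp n \<omega>m R W i)))"
  shows "tau_pdd = tau_y_rdd - tau_w_rdd \<bullet> \<gamma>m
    \<and> \<gamma>m = matrix_inv ((1 / real n) *\<^sub>R (\<Sum>i<n. \<omega>m i *\<^sub>R outer (Z i) (W_perp n \<omega>m R W i)))
            *v ((1 / real n) *\<^sub>R (\<Sum>i<n. (\<omega>m i * Y_perp n \<omega>m R Y i) *\<^sub>R Z i))"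
proof -
  have w_nonneg: "\<omega>p i \<ge> 0" "\<omega>m i \<ge> 0" for i
    using K_nonneg h_pos by (simp_all add: \<omega>p_def \<omega>m_def w_plus_def w_minus_def)
  have iv_p: "iv_eq n h \<omega>p R Y W Z \<alpha>p \<gamma>p"
    using someI_ex[OF ex1_implies_ex[OF iv_unique_p]] by (simp add: \<alpha>p_def \<gamma>p_def iv_sol_def)
  have iv_m: "iv_eq n h \<omega>m R Y W Z \<alpha>m \<gamma>m"
    using someI_ex[OF ex1_implies_ex[OF iv_unique_m]] by (simp add: \<alpha>m_def \<gamma>m_def iv_sol_def)
  have "\<alpha>p $ 1 = beta_y0 n h \<omega>p R Y - beta_w0 n h \<omega>p R W \<bullet> \<gamma>p"
    using iv_intercept_eq[OF w_nonneg(1) inv_gram_p _ iv_p] h_pos by simp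
  moreover have "\<alpha>m $ 1 = beta_y0 n h \<omega>m R Y - beta_w0 n h \<omega>m R W \<bullet> \<gamma>m"
    using iv_intercept_eq[OF w_nonneg(2) inv_gram_m _ iv_m] h_pos by simp
  ultimately have "tau_pdd = tau_y_rdd - tau_w_rdd \<bullet> \<gamma>m"
    by (simp add: tau_pdd_def tau_y_rdd_def tau_w_rdd_def inner_diff_left)
  with iv_slope_eq[OF inv_gram_m iv_m inv_ZW] show ?thesis
    by simp
qed

end
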